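(* Every pairwise balanced lobster has a complete $\alpha$-labeling.
   Context: For a graph $G=(V,E)$ with $m$ edges, an $\alpha$-labeling with critical number $k$ is an injective $f:V\to\{0,\ldots,m\}$ with distinct edge labels $|f(u)-f(v)|$ such that every edge $uv$ satisfies $f(u)\le k<f(v)$ or $f(v)\le k<f(u)$; it is complete if $f$ is bijective. A lobster is a tree whose base (delete all degree-one vertices) is a caterpillar (a tree whose base is a path). A lobster $L$ is described by a spine, a path $(v_1,\ldots,v_r)$, and lobes $F_i$ at $v_i$ (pairwise vertex-disjoint trees meeting the spine only in $v_i$, $L$ being the union of spine and lobes), each lobe $F_i$ consisting of $v_i$, vertices adjacent to $v_i$, and further leaves attached to those vertices; a neighbour of $v_i$ in $F_i$ with no further leaves is a pendant vertex at $v_i$, and a neighbour $u$ of $v_i$ together with its $\ge1$ further leaves is a (non-pendant) branch. A two-spinal-vertex tree $G$ consisting of adjacent vertices $w_1,w_2$, where $w_1$ has $s_1\ge0$ pendant neighbours and non-pendant branches centered at $u_{11},\ldots,u_{1r}$ with $u_{1i}$ having $x_i\ge1$ leaves, and $w_2$ has $s_2\ge0$ pendant neighbours and non-pendant branches centered at $u_{21},\ldots,u_{2s}$ with $u_{2j}$ having $y_j\ge1$ leaves, is balanced if $r=s$ and (when $r>0$) for all $i=1,\ldots,r$: $x_i=y_{r-\frac{i-1}{2}}$, $y_i=x_{r-\frac{i-1}{2}}$ for odd $i$, and $x_i=x_{i/2}$, $y_i=y_{i/2}$ for even $i$. A lobster $L$ is pairwise balanced if $r$ is even and, for each odd $i\in\{1,\ldots,r-1\}$,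 the subtree consisting of $v_i,v_{i+1}$ together with the lobes $F_i,F_{i+1}$ is balanced (for a suitable indexing of its branches). *)

theory Defs
  imports Main
begin

(* Graphs: finite vertex set V and edge set E of 2-element subsets of V. *)

definition alpha_labeling :: "'a set \<Rightarrow> 'a set set \<Rightarrow> ('a \<Rightarrow> nat) \<Rightarrow> nat \<Rightarrow> bool" where
  "alpha_labeling V E f k \<longleftrightarrow>
     inj_on f V \<and> f ` V \<subseteq> {0..card E} \<and>
     (\<forall>u v u' v'. {u, v} \<in> E \<longrightarrow> {u', v'} \<in> E \<longrightarrow>
        \<bar>int (f u) - int (f v)\<bar> = \<bar>int (f u') - int (f v')\<bar> \<longrightarrow> {u, v} = {u', v'}) \<and>
     (\<forall>u v. {u, v} \<in> E \<longrightarrow> (f u \<le> k \<and> k < f v) \<or> (f v \<le> k \<and> k < f u))"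

definition complete_alpha_labeling :: "'a set \<Rightarrow> 'a set set \<Rightarrow> ('a \<Rightarrow> nat) \<Rightarrow> nat \<Rightarrow> bool" where
  "complete_alpha_labeling V E f k \<longleftrightarrow> alpha_labeling V E f k \<and> bij_betw f V {0..card E}"

(* Concrete lobster built from a description: spine vertices Sp 0, ..., Sp (r-1) (0-indexed);
   at spine vertex i there are s i pendant vertices Pd i k, and branches centred at Ce i j
   (j < length (b i)), the centre Ce i j carrying b i ! j leaves Lf i j l. *)
datatype lv = Sp nat | Pd nat nat | Ce nat nat | Lf nat nat nat

definition lob_V :: "nat \<Rightarrow> (nat \<Rightarrow> nat) \<Rightarrow> (nat \<Rightarrow> nat list) \<Rightarrow> lv set" where
  "lob_V r s b =
     {Sp i | i. i < r} \<union> {Pd i k | i k. i < r \<and> k < s i} \<union>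
     {Ce i j | i j. i < r \<and> j < length (b i)} \<union>
     {Lf i j l | i j l. i < r \<and> j < length (b i) \<and> l < b i ! j}"

definition lob_E :: "nat \<Rightarrow> (nat \<Rightarrow> nat) \<Rightarrow> (nat \<Rightarrow> nat list) \<Rightarrow> lv set set" where
  "lob_E r s b =
     {{Sp i, Sp (Suc i)} | i. Suc i < r} \<union> {{Sp i, Pd i k} | i k. i < r \<and> k < s i} \<union>
     {{Sp i, Ce i j} | i j. i < r \<and> j < length (b i)} \<union>
     {{Ce i j, Lf i j l} | i j l. i < r \<and> j < length (b i) \<and> l < b i ! j}"

definition lobster_descr :: "nat \<Rightarrow> (nat \<Rightarrow> nat) \<Rightarrow> (nat \<Rightarrow> nat list) \<Rightarrow> bool" where
  "lobster_descr r s b \<longleftrightarrow> 0 < r \<and> (\<forall>i<r. \<forall>j<length (b i). 1 \<le> b i ! j)"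

definition nth1 :: "'b list \<Rightarrow> nat \<Rightarrow> 'b" where
  "nth1 xs i = xs ! (i - 1)"

(* balanced two-spinal-vertex tree with branch-size lists x (at w1) and y (at w2);
   the numbers of pendant vertices s1, s2 are unrestricted *)
definition balanced :: "nat list \<Rightarrow> nat list \<Rightarrow> bool" where
  "balanced x y \<longleftrightarrow> length x = length y \<and>
     (\<forall>i\<in>{1..length x}.
        (odd i \<longrightarrow> nth1 x i = nth1 y (length x - (i - 1) div 2) \<and>
                   nth1 y i = nth1 x (length x - (i - 1) div 2)) \<and>
        (even i \<longrightarrow> nth1 x i = nth1 x (i div 2) \<and> nth1 y i = nth1 y (i div 2)))"

(* pairwise balanced description: r even, and for each pair of spine vertices
   (paper's v_i, v_{i+1}, i odd; here 0-indexed i even) the subtree is balanced *)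
definition pairwise_balanced_descr :: "nat \<Rightarrow> (nat \<Rightarrow> nat) \<Rightarrow> (nat \<Rightarrow> nat list) \<Rightarrow> bool" where
  "pairwise_balanced_descr r s b \<longleftrightarrow> lobster_descr r s b \<and> even r \<and>
     (\<forall>i<r. even i \<longrightarrow> balanced (b i) (b (Suc i)))"

definition pairwise_balanced_lobster :: "'a set \<Rightarrow> 'a set set \<Rightarrow> bool" where
  "pairwise_balanced_lobster V E \<longleftrightarrow>
     (\<exists>r s b \<phi>. pairwise_balanced_descr r s b \<and> bij_betw \<phi> (lob_V r s b) V \<and>
                E = (\<lambda>e. \<phi> ` e) ` lob_E r s b)"

end

theory Submission
  imports Defs
begin

text \<open>Each pair of consecutive spine vertices \<open>v\<^sub>2\<^sub>j\<^sub>-\<^sub>1, v\<^sub>2\<^sub>j\<close> spans a balanced two-spinal-vertex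
  tree, which has an explicit complete \<open>\<alpha>\<close>-labeling: the first spine vertex gets \<open>0\<close>, the second
  the smallest label above the critical number, and branch centres and leaves fill consecutive
  blocks of labels. Balancedness says that the labels of the edges from the two spine vertices
  to the branch centres are exactly the values missed by the leaf edges, so all edge labels
  \<open>1..|E|\<close> occur. Two graphs with complete \<open>\<alpha>\<close>-labelings can be joined by an edge between the
  vertex right above the critical number of the first and the vertex labelled \<open>0\<close> of the second,
  again giving a complete \<open>\<alpha>\<close>-labeling; joining the pairs one after another along the spine
  labels the whole lobster.\<close>

section \<open>Complete \<alpha>-labelings of graphs\<close>

definition graph :: "'a set \<Rightarrow> 'a set set \<Rightarrow> bool" where
  "graph V E \<longleftrightarrow> finite E \<and> (\<forall>e\<in>E. \<exists>u v. e = {u, v} \<and> u \<noteq> v \<and> u \<in> V \<and> v \<in> V)"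

definition edge_label :: "('a \<Rightarrow> nat) \<Rightarrow> 'a set \<Rightarrow> int" where
  "edge_label f e = int (Max (f ` e)) - int (Min (f ` e))"

lemma edge_label_doubleton [simp]: "edge_label f {u, v} = \<bar>int (f u) - int (f v)\<bar>"
  by (simp add: edge_label_def max_def min_def)

lemma graph_edgeE:
  assumes "graph V E" "e \<in> E"
  obtains u v where "e = {u, v}" "u \<noteq> v" "u \<in> V" "v \<in> V"
  using assms unfolding graph_def by blast

lemma graph_edge_subset: "graph V E \<Longrightarrow> e \<in> E \<Longrightarrow> e \<subseteq> V"
  by (auto elim: graph_edgeE)

lemma complete_alpha_labeling_iff:
  assumes "graph V E"
  shows "complete_alpha_labeling V E f k \<longleftrightarrow>
    bij_betw f V {0..card E} \<and> inj_on (edge_label f) E \<and>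
    (\<forall>e\<in>E. Min (f ` e) \<le> k \<and> k < Max (f ` e))"
proof -
  have edge: "\<exists>u v. e = {u, v}" if "e \<in> E" for e
    using assms that by (metis graph_edgeE)
  have distinct: "(\<forall>u v u' v'. {u, v} \<in> E \<longrightarrow> {u', v'} \<in> E \<longrightarrow>
        \<bar>int (f u) - int (f v)\<bar> = \<bar>int (f u') - int (f v')\<bar> \<longrightarrow> {u, v} = {u', v'})
      \<longleftrightarrow> inj_on (edge_label f) E"
    unfolding inj_on_def using edge by (metis edge_label_doubleton)
  have cut: "(\<forall>u v. {u, v} \<in> E \<longrightarrow> (f u \<le> k \<and> k < f v) \<or> (f v \<le> k \<and> k < f u))
      \<longleftrightarrow> (\<forall>e\<in>E. Min (f ` e) \<le> k \<and> k < Max (f ` e))"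
    using edge by (fastforce simp: min_def max_def split: if_splits)
  show ?thesis
    unfolding complete_alpha_labeling_def alpha_labeling_def distinct cut
    by (auto simp: bij_betw_def)
qed

lemma graph_image:
  assumes "graph L EL" "inj_on \<phi> L"
  shows "graph (\<phi> ` L) ((`) \<phi> ` EL)"
  using assms unfolding graph_def inj_on_def by fastforce

lemma complete_alpha_labeling_image:
  assumes lab: "complete_alpha_labeling L EL f k" and G: "graph L EL" and \<phi>: "bij_betw \<phi> L V"
  shows "complete_alpha_labeling V ((`) \<phi> ` EL) (f \<circ> inv_into L \<phi>) k"
proof -
  let ?g = "f \<circ> inv_into L \<phi>"
  have inj\<phi>: "inj_on \<phi> L" and V: "V = \<phi> ` L" using \<phi> by (auto simp: bij_betw_def)
  have G': "graph V ((`) \<phi> ` EL)" using graph_image[OF G inj\<phi>] V by simp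
  have "inj_on ((`) \<phi>) EL"
    using inj_on_image_Pow[OF inj\<phi>] graph_edge_subset[OF G] by (blast intro: inj_on_subset)
  then have card: "card ((`) \<phi> ` EL) = card EL" by (rule card_image)
  have img: "?g ` (\<phi> ` e) = f ` e" if "e \<in> EL" for e
    using graph_edge_subset[OF G that] inj\<phi> by (force simp: image_comp)
  from lab G have bij: "bij_betw f L {0..card EL}" and inj: "inj_on (edge_label f) EL"
    and cut: "\<forall>e\<in>EL. Min (f ` e) \<le> k \<and> k < Max (f ` e)"
    by (simp_all add: complete_alpha_labeling_iff)
  have "bij_betw ?g V {0..card ((`) \<phi> ` EL)}"
    unfolding card using bij_betw_trans[OF bij_betw_inv_into[OF \<phi>] bij] by simp
  moreover have "inj_on (edge_label ?g) ((`) \<phi> ` EL)"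
    by (rule inj_on_imageI) (use inj img in \<open>auto simp: inj_on_def edge_label_def\<close>)
  moreover have "\<forall>e\<in>(`) \<phi> ` EL. Min (?g ` e) \<le> k \<and> k < Max (?g ` e)"
    using cut img by auto
  ultimately show ?thesis by (simp add: complete_alpha_labeling_iff[OF G'])
qed

lemma cut_edgeE:
  assumes "graph V E" "e \<in> E" "Min (f ` e) \<le> k \<and> k < Max (f ` e)"
  obtains u v where "e = {u, v}" "u \<in> V" "v \<in> V" "f u \<le> k" "k < f v"
proof -
  obtain u v where e: "e = {u, v}" "u \<in> V" "v \<in> V" using assms(1,2) by (rule graph_edgeE)
  have mm: "min (f u) (f v) \<le> k" "k < max (f u) (f v)" using assms(3) e(1) by simp_all
  show thesis
  proof (cases "f u \<le> f v")
    case True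
    then show ?thesis using mm by (intro that[OF e]) (simp_all add: min_def max_def)
  next
    case False
    then show ?thesis using mm e by (intro that[of v u]) (simp_all add: insert_commute min_def max_def)
  qed
qed

lemma graph_join:
  assumes "graph V1 E1" "graph V2 E2" "a \<in> V1" "b \<in> V2" "a \<noteq> b"
  shows "graph (V1 \<union> V2) (E1 \<union> E2 \<union> {{a, b}})"
proof -
  have "\<exists>u v. e = {u, v} \<and> u \<noteq> v \<and> u \<in> V1 \<union> V2 \<and> v \<in> V1 \<union> V2"
    if "e \<in> E1 \<union> E2 \<union> {{a, b}}" for e
    using that
  proof (elim UnE)
    assume "e \<in> E1" then show ?thesis by (rule graph_edgeE[OF assms(1)]) blast
  next
    assume "e \<in> E2" then show ?thesis by (rule graph_edgeE[OF assms(2)]) blast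
  qed (use assms in auto)
  then show ?thesis using assms(1,2) by (simp add: graph_def)
qed

locale alpha_join =
  fixes V1 V2 :: "'a set" and E1 E2 :: "'a set set" and f1 f2 :: "'a \<Rightarrow> nat" and k1 k2 :: nat
    and a b :: 'a
  assumes lab1: "complete_alpha_labeling V1 E1 f1 k1" and G1: "graph V1 E1"
    and lab2: "complete_alpha_labeling V2 E2 f2 k2" and G2: "graph V2 E2"
    and disjoint: "V1 \<inter> V2 = {}" and a: "a \<in> V1" "f1 a = Suc k1" and b: "b \<in> V2" "f2 b = 0"
    and k2_le: "k2 \<le> card E2"
begin

abbreviation "V \<equiv> V1 \<union> V2"
abbreviation "E \<equiv> E1 \<union> E2 \<union> {{a, b}}"
abbreviation "k \<equiv> k1 + k2 + 1"

text \<open>Labels of \<open>G\<^sub>1\<close> above its cut are moved up by \<open>|E\<^sub>2| + 1\<close> and \<open>G\<^sub>2\<close> is placed right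
  above \<open>k\<^sub>1\<close>. Then the edge labels of \<open>E\<^sub>2\<close> stay in \<open>1..|E\<^sub>2|\<close>, the new edge \<open>ab\<close> gets
  \<open>|E\<^sub>2| + 1\<close> and those of \<open>E\<^sub>1\<close> are shifted by \<open>|E\<^sub>2| + 1\<close>.\<close>

definition g :: "'a \<Rightarrow> nat" where
  "g v = (if v \<in> V1 then if f1 v \<le> k1 then f1 v else f1 v + card E2 + 1 else f2 v + k1 + 1)"

lemma bij1: "bij_betw f1 V1 {0..card E1}" and inj1: "inj_on (edge_label f1) E1"
  and cut1: "\<forall>e\<in>E1. Min (f1 ` e) \<le> k1 \<and> k1 < Max (f1 ` e)"
  using lab1 G1 by (simp_all add: complete_alpha_labeling_iff)

lemma bij2: "bij_betw f2 V2 {0..card E2}" and inj2: "inj_on (edge_label f2) E2"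
  and cut2: "\<forall>e\<in>E2. Min (f2 ` e) \<le> k2 \<and> k2 < Max (f2 ` e)"
  using lab2 G2 by (simp_all add: complete_alpha_labeling_iff)

lemma image1: "f1 ` V1 = {0..card E1}" and image2: "f2 ` V2 = {0..card E2}"
  using bij1 bij2 by (simp_all add: bij_betw_def)

lemma range1: "v \<in> V1 \<Longrightarrow> f1 v \<le> card E1" and range2: "v \<in> V2 \<Longrightarrow> f2 v \<le> card E2"
  using image1 image2 by auto

lemma k1_less: "k1 < card E1"
  using range1[OF a(1)] a(2) by simp

lemma g_low: "v \<in> V1 \<Longrightarrow> f1 v \<le> k1 \<Longrightarrow> g v = f1 v"
  and g_high: "v \<in> V1 \<Longrightarrow> k1 < f1 v \<Longrightarrow> g v = f1 v + card E2 + 1"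
  and g_V2: "v \<in> V2 \<Longrightarrow> g v = f2 v + k1 + 1"
  using disjoint by (auto simp: g_def)

lemma graph_E: "graph V E"
  using G1 G2 a(1) b(1) by (rule graph_join) (use disjoint a(1) b(1) in blast)

lemma card_E: "card E = card E1 + card E2 + 1"
proof -
  have "E1 \<inter> E2 = {}"
  proof (intro equals0I)
    fix e assume e: "e \<in> E1 \<inter> E2"
    then obtain u v where "e = {u, v}" "u \<in> V1" by (auto elim: graph_edgeE[OF G1])
    then show False using graph_edge_subset[OF G2] e disjoint by blast
  qed
  moreover have "{a, b} \<notin> E1" "{a, b} \<notin> E2"
    using graph_edge_subset[OF G1] graph_edge_subset[OF G2] a(1) b(1) disjoint by blast+
  ultimately show ?thesis using G1 G2 by (simp add: graph_def card_Un_disjoint)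
qed

lemma image_g: "g ` V = {0..card E}"
proof (intro equalityI subsetI)
  fix n assume "n \<in> g ` V"
  then obtain v where "v \<in> V" "n = g v" by blast
  then show "n \<in> {0..card E}" using range1[of v] range2[of v] k1_less card_E by (auto simp: g_def)
next
  fix n assume n: "n \<in> {0..card E}"
  consider "n \<le> k1" | "k1 < n" "n \<le> k1 + card E2 + 1" | "k1 + card E2 + 1 < n" by linarith
  then show "n \<in> g ` V"
  proof cases
    case 1
    then have "n \<in> f1 ` V1" using image1 k1_less by simp
    then obtain v where "n = f1 v" "v \<in> V1" by (rule imageE)
    then show ?thesis using 1 g_low[of v] by (intro image_eqI[of _ g v]) simp_all
  next
    case 2
    then have "n - k1 - 1 \<in> f2 ` V2" using image2 by simp
    then obtain v where "n - k1 - 1 = f2 v" "v \<in> V2" by (rule imageE)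
    then show ?thesis using 2 g_V2[of v] by (intro image_eqI[of _ g v]) simp_all
  next
    case 3
    then have "n - card E2 - 1 \<in> f1 ` V1" using image1 n card_E by simp
    then obtain v where "n - card E2 - 1 = f1 v" "v \<in> V1" by (rule imageE)
    then show ?thesis using 3 g_high[of v] by (intro image_eqI[of _ g v]) simp_all
  qed
qed

lemma bij_g: "bij_betw g V {0..card E}"
proof -
  have "finite V" using bij1 bij2 by (simp add: bij_betw_finite)
  moreover have "card V = card E1 + card E2 + 2"
    using bij1 bij2 disjoint by (simp add: card_Un_disjoint bij_betw_finite bij_betw_same_card)
  ultimately show ?thesis
    using image_g card_E eq_card_imp_inj_on[of V g] by (simp add: bij_betw_def)
qed

lemma edge_label_E1:
  assumes "e \<in> E1"
  shows "edge_label g e = edge_label f1 e + int (card E2) + 1" "int (card E2) + 1 < edge_label g e"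
    and "Min (g ` e) \<le> k \<and> k < Max (g ` e)"
proof -
  obtain u v where "e = {u, v}" "u \<in> V1" "v \<in> V1" "f1 u \<le> k1" "k1 < f1 v"
    using cut1 assms by (blast elim: cut_edgeE[OF G1])
  then show "edge_label g e = edge_label f1 e + int (card E2) + 1" "int (card E2) + 1 < edge_label g e"
    and "Min (g ` e) \<le> k \<and> k < Max (g ` e)"
    using g_low[of u] g_high[of v] k2_le by simp_all
qed

lemma edge_label_E2:
  assumes "e \<in> E2"
  shows "edge_label g e = edge_label f2 e" "edge_label g e \<le> int (card E2)"
    and "Min (g ` e) \<le> k \<and> k < Max (g ` e)"
proof -
  obtain u v where "e = {u, v}" "u \<in> V2" "v \<in> V2" "f2 u \<le> k2" "k2 < f2 v"
    using cut2 assms by (blast elim: cut_edgeE[OF G2])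
  moreover have "f2 v \<le> card E2" using \<open>v \<in> V2\<close> by (rule range2)
  ultimately show "edge_label g e = edge_label f2 e" "edge_label g e \<le> int (card E2)"
    and "Min (g ` e) \<le> k \<and> k < Max (g ` e)"
    using g_V2[of u] g_V2[of v] by simp_all
qed

lemma edge_label_ab: "edge_label g {a, b} = int (card E2) + 1" "Min (g ` {a, b}) \<le> k \<and> k < Max (g ` {a, b})"
  using g_high[OF a(1)] g_V2[OF b(1)] a(2) b(2) k2_le by simp_all

lemma inj_edge_label_g: "inj_on (edge_label g) E"
proof (rule inj_onI)
  fix e e' assume e: "e \<in> E" and e': "e' \<in> E" and eq: "edge_label g e = edge_label g e'"
  have "e \<in> E1 \<longleftrightarrow> e' \<in> E1" "e \<in> E2 \<longleftrightarrow> e' \<in> E2"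
    using e e' eq edge_label_E1(2) edge_label_E2(2) edge_label_ab(1) by fastforce+
  then consider "e \<in> E1" "e' \<in> E1" | "e \<in> E2" "e' \<in> E2" | "e = {a, b}" "e' = {a, b}"
    using e e' by blast
  then show "e = e'"
  proof cases
    case 1 then show ?thesis using eq edge_label_E1(1) inj1 by (auto dest: inj_onD)
  next
    case 2 then show ?thesis using eq edge_label_E2(1) inj2 by (auto dest: inj_onD)
  qed simp
qed

theorem complete_alpha_labeling_g: "complete_alpha_labeling V E g k"
  unfolding complete_alpha_labeling_iff[OF graph_E]
  using bij_g inj_edge_label_g edge_label_E1(3) edge_label_E2(3) edge_label_ab(2) by blast

end

lemma complete_alpha_labeling_join:
  assumes "complete_alpha_labeling V1 E1 f1 k1" "graph V1 E1"
    and "complete_alpha_labeling V2 E2 f2 k2" "graph V2 E2"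
    and "V1 \<inter> V2 = {}" "a \<in> V1" "f1 a = Suc k1" "b \<in> V2" "f2 b = 0" "k2 \<le> card E2"
  shows "\<exists>g. complete_alpha_labeling (V1 \<union> V2) (E1 \<union> E2 \<union> {{a, b}}) g (k1 + k2 + 1) \<and>
    (\<forall>v\<in>V2. g v = f2 v + k1 + 1)"
proof -
  interpret alpha_join V1 V2 E1 E2 f1 f2 k1 k2 a b using assms by unfold_locales
  show ?thesis using complete_alpha_labeling_g g_V2 by blast
qed

section \<open>Balanced two-spinal-vertex trees\<close>

text \<open>\<open>interleave x y\<close> is the sequence \<open>x\<^sub>R, y\<^sub>1, x\<^sub>R\<^sub>-\<^sub>1, y\<^sub>2, \<dots>\<close>; being balanced means exactly
  that it begins with \<open>y\<close> and continues with \<open>x\<close> reversed.\<close>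

definition interleave :: "nat list \<Rightarrow> nat list \<Rightarrow> nat \<Rightarrow> nat" where
  "interleave x y p = (if even p then x ! (length x - 1 - p div 2) else y ! (p div 2))"

lemma balanced_interleave:
  assumes "balanced x y"
  shows "map (interleave x y) [0..<2 * length x] = y @ rev x"
proof -
  define R where "R = length x"
  have len: "length y = R" using assms unfolding balanced_def R_def by simp
  have bal: "\<And>j. 1 \<le> j \<Longrightarrow> j \<le> R \<Longrightarrow>
        (odd j \<longrightarrow> x ! (j - 1) = y ! (R - (j - 1) div 2 - 1) \<and> y ! (j - 1) = x ! (R - (j - 1) div 2 - 1)) \<and>
        (even j \<longrightarrow> x ! (j - 1) = x ! (j div 2 - 1) \<and> y ! (j - 1) = y ! (j div 2 - 1))"
    using assms unfolding balanced_def nth1_def R_def by auto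
  have first_half: "interleave x y v = y ! v" if "v < R" for v
  proof (cases "even v")
    case True
    then obtain t where t: "v = 2 * t" by blast
    from bal[of "2 * t + 1"] that t have "y ! (2 * t) = x ! (R - t - 1)" by simp
    then show ?thesis using t unfolding interleave_def R_def[symmetric] by simp
  next
    case False
    then obtain t where t: "v = 2 * t + 1" by (metis oddE)
    from bal[of "2 * t + 2"] that t have "y ! (2 * t + 1) = y ! t" by simp
    then show ?thesis using t unfolding interleave_def R_def[symmetric] by simp
  qed
  have second_half: "interleave x y (R + t) = x ! (R - 1 - t)" if "t < R" for t
  proof (cases "even (R + t)")
    case True
    then obtain q where q: "R + t = 2 * q" by blast
    then have "R - t = 2 * (R - q)" using that by simp
    with bal[of "R - t"] that have "x ! (R - t - 1) = x ! (R - q - 1)" by simp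
    then show ?thesis using q True unfolding interleave_def R_def[symmetric] by (simp add: algebra_simps)
  next
    case False
    then obtain q where q: "R + t = 2 * q + 1" by (metis oddE)
    then have "odd (R - t)" "(R - t - 1) div 2 = R - q - 1" "R - (R - q - 1) - 1 = q"
      using that by (simp_all add: odd_pos)
    with bal[of "R - t"] that have "x ! (R - t - 1) = y ! q" by simp
    then show ?thesis using q False unfolding interleave_def R_def[symmetric] by (simp add: algebra_simps)
  qed
  show ?thesis
  proof (rule nth_equalityI)
    fix v assume "v < length (map (interleave x y) [0..<2 * length x])"
    then have "v < 2 * R" by (simp add: R_def)
    then show "map (interleave x y) [0..<2 * length x] ! v = (y @ rev x) ! v"
      using first_half[of v] second_half[of "v - R"] len
      by (cases "v < R") (simp_all add: nth_append rev_nth R_def)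
  qed (simp add: len R_def)
qed

lemma sequence_crossing:
  fixes G :: "nat \<Rightarrow> int"
  assumes "\<forall>t<R. G t \<le> G (Suc t)" "G 0 \<le> n" "n < G R"
  shows "\<exists>t<R. G t \<le> n \<and> n < G (Suc t)"
  using assms
proof (induction R)
  case (Suc R)
  show ?case
  proof (cases "n < G R")
    case True
    with Suc obtain t where "t < R" "G t \<le> n" "n < G (Suc t)" by auto
    then show ?thesis by (intro exI[of _ t]) auto
  next
    case False
    then show ?thesis using Suc.prems by (intro exI[of _ R]) auto
  qed
qed simp

definition spine_pair_V :: "nat \<Rightarrow> nat \<Rightarrow> nat \<Rightarrow> nat list \<Rightarrow> nat list \<Rightarrow> lv set" where
  "spine_pair_V i s1 s2 x y = {Sp i, Sp (Suc i)} \<union> {Pd i q |q. q < s1} \<union> {Pd (Suc i) q |q. q < s2} \<union>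
     {Ce i c |c. c < length x} \<union> {Ce (Suc i) c |c. c < length y} \<union>
     {Lf i c l |c l. c < length x \<and> l < x ! c} \<union> {Lf (Suc i) c l |c l. c < length y \<and> l < y ! c}"

definition spine_pair_E :: "nat \<Rightarrow> nat \<Rightarrow> nat \<Rightarrow> nat list \<Rightarrow> nat list \<Rightarrow> lv set set" where
  "spine_pair_E i s1 s2 x y = {{Sp i, Sp (Suc i)}} \<union> {{Sp i, Pd i q} |q. q < s1} \<union>
     {{Sp (Suc i), Pd (Suc i) q} |q. q < s2} \<union>
     {{Sp i, Ce i c} |c. c < length x} \<union> {{Sp (Suc i), Ce (Suc i) c} |c. c < length y} \<union>
     {{Ce i c, Lf i c l} |c l. c < length x \<and> l < x ! c} \<union>
     {{Ce (Suc i) c, Lf (Suc i) c l} |c l. c < length y \<and> l < y ! c}"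

text \<open>The labeling \<open>F\<close> of the subtree spanned by the spine vertices \<open>w\<^sub>1 = Sp i\<close>,
  \<open>w\<^sub>2 = Sp (Suc i)\<close>, with critical number \<open>K\<close>. The low labels \<open>0..K\<close> go to \<open>w\<^sub>1\<close>, then for
  \<open>t = 0, \<dots>, R - 1\<close> to a block consisting of the \<open>a t\<close> leaves of the \<open>t\<close>-th branch of \<open>w\<^sub>1\<close>
  counted from the end followed by the centre of the \<open>t\<close>-th branch of \<open>w\<^sub>2\<close>
  (\<open>low_vertex t l\<close> has label \<open>lo t + l\<close>), and finally to the pendant vertices of \<open>w\<^sub>2\<close>.
  Symmetrically the high labels run downwards from \<open>M\<close> through blocks formed by a centre at
  \<open>w\<^sub>1\<close> and the \<open>b t\<close> leaves of the \<open>t\<close>-th branch of \<open>w\<^sub>2\<close> (\<open>high_vertex t l\<close> has label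
  \<open>hi t - l\<close>) down to \<open>w\<^sub>2\<close> at \<open>K + 1\<close>, and upwards from \<open>M\<close> to the pendant vertices of
  \<open>w\<^sub>1\<close>.\<close>

locale spine_pair =
  fixes i s1 s2 :: nat and x y :: "nat list"
  assumes balanced: "balanced x y"
begin

abbreviation "V \<equiv> spine_pair_V i s1 s2 x y"
abbreviation "E \<equiv> spine_pair_E i s1 s2 x y"

definition "R = length x"
definition "a t = int (x ! (R - 1 - t))"
definition "b t = int (y ! t)"
definition "sum_a n = (\<Sum>t<n. a t)"
definition "sum_b n = (\<Sum>t<n. b t)"
definition "K = int s2 + int R + sum_a R"
definition "M = K + 1 + int R + sum_b R"
definition "N = M + int s1"
definition "lo t = 1 + sum_a t + int t"
definition "hi t = M - int t - sum_b t"
definition "sum_z n = (\<Sum>v<n. int (interleave x y v))"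

definition F :: "lv \<Rightarrow> int" where
  "F v = (case v of Sp j \<Rightarrow> if j = i then 0 else K + 1
     | Pd j q \<Rightarrow> if j = i then N - int q else K - int q
     | Ce j c \<Rightarrow> if j = i then hi (R - 1 - c) else lo c + a c
     | Lf j c l \<Rightarrow> if j = i then lo (R - 1 - c) + int l else hi c - 1 - int l)"

lemma length_y: "length y = R"
  using balanced by (simp add: balanced_def R_def)

lemma a_nonneg: "a t \<ge> 0" and b_nonneg: "b t \<ge> 0"
  by (simp_all add: a_def b_def)

lemma a_rev: "c < R \<Longrightarrow> a (R - 1 - c) = int (x ! c)"
  by (simp add: a_def)

lemma sum_a_Suc: "sum_a (Suc n) = sum_a n + a n" and sum_b_Suc: "sum_b (Suc n) = sum_b n + b n"
  by (simp_all add: sum_a_def sum_b_def)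

lemma sum_a_mono: "n \<le> n' \<Longrightarrow> sum_a n \<le> sum_a n'"
  unfolding sum_a_def by (rule sum_mono2) (auto simp: a_nonneg)

lemma sum_b_mono: "n \<le> n' \<Longrightarrow> sum_b n \<le> sum_b n'"
  unfolding sum_b_def by (rule sum_mono2) (auto simp: b_nonneg)

lemma sum_a_nonneg: "sum_a n \<ge> 0" and sum_b_nonneg: "sum_b n \<ge> 0"
  using sum_a_mono[of 0 n] sum_b_mono[of 0 n] by (simp_all add: sum_a_def sum_b_def)

lemma K_bounds: "int s2 + int R \<le> K" "K + 1 \<le> M" "M \<le> N"
  using sum_a_nonneg sum_b_nonneg by (simp_all add: K_def M_def N_def)

lemma lo_Suc: "lo (Suc t) = lo t + a t + 1" by (simp add: lo_def sum_a_Suc)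
lemma hi_Suc: "hi (Suc t) = hi t - b t - 1" by (simp add: hi_def sum_b_Suc)
lemma lo_0: "lo 0 = 1" by (simp add: lo_def sum_a_def)
lemma hi_0: "hi 0 = M" by (simp add: hi_def sum_b_def)
lemma lo_R: "lo R = K - int s2 + 1" by (simp add: lo_def K_def)
lemma hi_R: "hi R = K + 1" by (simp add: hi_def M_def)

lemma lo_less: "t < t' \<Longrightarrow> lo t + a t < lo t'"
  using sum_a_mono[of "Suc t" t'] by (simp add: lo_def sum_a_Suc)

lemma hi_less: "t < t' \<Longrightarrow> hi t' < hi t - b t"
  using sum_b_mono[of "Suc t" t'] by (simp add: hi_def sum_b_Suc)

lemma lo_ge_1: "lo t \<ge> 1"
  using sum_a_nonneg[of t] by (simp add: lo_def)

lemma hi_le_M: "hi t \<le> M"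
  using sum_b_nonneg[of t] by (simp add: hi_def)

lemma lo_block_le: "t < R \<Longrightarrow> lo t + a t \<le> K - int s2"
  using lo_less[of t R] lo_R by simp

lemma hi_block_ge: "t < R \<Longrightarrow> hi t - b t \<ge> K + 2"
  using hi_less[of t R] hi_R by simp

lemma hi_gt_K: "t \<le> R \<Longrightarrow> hi t \<ge> K + 1"
  using hi_R hi_less[of t R] b_nonneg[of t] by (cases "t = R") auto

lemma lo_block_inj:
  "lo t + l = lo t' + l' \<Longrightarrow> 0 \<le> l \<Longrightarrow> l \<le> a t \<Longrightarrow> 0 \<le> l' \<Longrightarrow> l' \<le> a t' \<Longrightarrow> t = t' \<and> l = l'"
  using lo_less[of t t'] lo_less[of t' t] by (cases t t' rule: linorder_cases) auto

lemma hi_block_inj: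
  "hi t - l = hi t' - l' \<Longrightarrow> 0 \<le> l \<Longrightarrow> l \<le> b t \<Longrightarrow> 0 \<le> l' \<Longrightarrow> l' \<le> b t' \<Longrightarrow> t = t' \<and> l = l'"
  using hi_less[of t t'] hi_less[of t' t] by (cases t t' rule: linorder_cases) auto

definition "low_vertex t l = (if l = a t then Ce (Suc i) t else Lf i (R - 1 - t) (nat l))"
definition "high_vertex t l = (if l = 0 then Ce i (R - 1 - t) else Lf (Suc i) t (nat (l - 1)))"

lemma F_simps [simp]:
  "F (Sp i) = 0" "F (Sp (Suc i)) = K + 1" "F (Pd i q) = N - int q" "F (Pd (Suc i) q) = K - int q"
  by (simp_all add: F_def)

lemma low_vertex:
  assumes "t < R" "0 \<le> l" "l \<le> a t"
  shows "low_vertex t l \<in> V" "F (low_vertex t l) = lo t + l"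
proof -
  have "R - 1 - (R - 1 - t) = t" using assms(1) by simp
  then show "F (low_vertex t l) = lo t + l" using assms by (simp add: low_vertex_def F_def)
  show "low_vertex t l \<in> V"
    using assms a_rev[of "R - 1 - t"] length_y
    by (auto simp: low_vertex_def spine_pair_V_def R_def nat_less_iff)
qed

lemma high_vertex:
  assumes "t < R" "0 \<le> l" "l \<le> b t"
  shows "high_vertex t l \<in> V" "F (high_vertex t l) = hi t - l"
proof -
  have "R - 1 - (R - 1 - t) = t" using assms(1) by simp
  then show "F (high_vertex t l) = hi t - l" using assms by (simp add: high_vertex_def F_def)
  show "high_vertex t l \<in> V"
    using assms length_y by (auto simp: high_vertex_def spine_pair_V_def R_def b_def)
qed

lemma spine_pair_V_cases:
  assumes "v \<in> V"
  obtains "v = Sp i"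
  | t l where "t < R" "0 \<le> l" "l \<le> a t" "v = low_vertex t l"
  | q where "q < s2" "v = Pd (Suc i) q"
  | "v = Sp (Suc i)"
  | t l where "t < R" "0 \<le> l" "l \<le> b t" "v = high_vertex t l"
  | q where "q < s1" "v = Pd i q"
proof -
  have R_rev: "R - 1 - (R - 1 - c) = c" if "c < R" for c using that by simp
  from assms consider "v = Sp i" | "v = Sp (Suc i)" | q where "q < s1" "v = Pd i q"
    | q where "q < s2" "v = Pd (Suc i) q" | c where "c < R" "v = Ce i c" | c where "c < R" "v = Ce (Suc i) c"
    | c l where "c < R" "l < x ! c" "v = Lf i c l" | c l where "c < R" "l < y ! c" "v = Lf (Suc i) c l"
    unfolding spine_pair_V_def R_def length_y[unfolded R_def] by blast
  then show thesis
  proof cases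
    case (5 c)
    then have "v = high_vertex (R - 1 - c) 0" by (simp add: high_vertex_def R_rev)
    with 5 b_nonneg show thesis by (intro that(5)[of "R - 1 - c" 0]) auto
  next
    case (6 c)
    then have "v = low_vertex c (a c)" by (simp add: low_vertex_def)
    with 6 a_nonneg show thesis by (intro that(2)[of c "a c"]) auto
  next
    case (7 c l)
    then have "int l < a (R - 1 - c)" using a_rev[of c] by simp
    with 7 have "v = low_vertex (R - 1 - c) (int l)" by (simp add: low_vertex_def R_rev)
    with 7 \<open>int l < a (R - 1 - c)\<close> show thesis by (intro that(2)[of "R - 1 - c" "int l"]) auto
  next
    case (8 c l)
    then have "v = high_vertex c (int l + 1)" "int l < b c" by (simp_all add: high_vertex_def b_def)
    with 8 show thesis by (intro that(5)[of c "int l + 1"]) auto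
  qed (use that in blast)+
qed

lemma spine_pair_V_labels:
  assumes "v \<in> V"
  obtains "v = Sp i" "F v = 0"
  | t l where "t < R" "0 \<le> l" "l \<le> a t" "v = low_vertex t l" "F v = lo t + l"
      "1 \<le> F v" "F v \<le> K - int s2"
  | q where "q < s2" "v = Pd (Suc i) q" "F v = K - int q"
  | "v = Sp (Suc i)" "F v = K + 1"
  | t l where "t < R" "0 \<le> l" "l \<le> b t" "v = high_vertex t l" "F v = hi t - l"
      "K + 2 \<le> F v" "F v \<le> M"
  | q where "q < s1" "v = Pd i q" "F v = N - int q"
  using assms
proof (cases rule: spine_pair_V_cases)
  case (2 t l)
  then show thesis using that(2) low_vertex(2) lo_ge_1[of t] lo_block_le[of t] by simp
next
  case (5 t l)
  then show thesis using that(5) high_vertex(2) hi_le_M[of t] hi_block_ge[of t] by simp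
qed (use that in simp_all)

lemma F_range: "v \<in> V \<Longrightarrow> 0 \<le> F v \<and> F v \<le> N"
  using K_bounds by (elim spine_pair_V_labels) (simp_all add: N_def)

lemma vertex_of_label:
  assumes v: "v \<in> V"
  shows "F v = 0 \<Longrightarrow> v = Sp i"
    and "t < R \<Longrightarrow> 0 \<le> l \<Longrightarrow> l \<le> a t \<Longrightarrow> F v = lo t + l \<Longrightarrow> v = low_vertex t l"
    and "q < s2 \<Longrightarrow> F v = K - int q \<Longrightarrow> v = Pd (Suc i) q"
    and "F v = K + 1 \<Longrightarrow> v = Sp (Suc i)"
    and "t < R \<Longrightarrow> 0 \<le> l \<Longrightarrow> l \<le> b t \<Longrightarrow> F v = hi t - l \<Longrightarrow> v = high_vertex t l"
    and "q < s1 \<Longrightarrow> F v = N - int q \<Longrightarrow> v = Pd i q"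
proof -
  note bounds = K_bounds N_def
  show "v = Sp i" if "F v = 0"
    using v by (cases rule: spine_pair_V_labels) (use that bounds in \<open>simp; fail\<close> | linarith)+
  show "v = low_vertex t l" if "t < R" "0 \<le> l" "l \<le> a t" "F v = lo t + l"
    using v
  proof (cases rule: spine_pair_V_labels)
    case (2 t' l')
    then show ?thesis using that lo_block_inj[of t' l' t l] by simp
  qed (use that lo_ge_1[of t] lo_block_le[of t] bounds in linarith)+
  show "v = Pd (Suc i) q" if "q < s2" "F v = K - int q"
    using v by (cases rule: spine_pair_V_labels) (use that bounds in \<open>simp; fail\<close> | linarith)+
  show "v = Sp (Suc i)" if "F v = K + 1"
    using v by (cases rule: spine_pair_V_labels) (use that bounds in \<open>simp; fail\<close> | linarith)+
  show "v = high_vertex t l" if "t < R" "0 \<le> l" "l \<le> b t" "F v = hi t - l"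
    using v
  proof (cases rule: spine_pair_V_labels)
    case (5 t' l')
    then show ?thesis using that hi_block_inj[of t' l' t l] by simp
  qed (use that hi_le_M[of t] hi_block_ge[of t] bounds in linarith)+
  show "v = Pd i q" if "q < s1" "F v = N - int q"
    using v by (cases rule: spine_pair_V_labels) (use that bounds in \<open>simp; fail\<close> | linarith)+
qed

lemma F_inj: "inj_on F V"
proof (rule inj_onI)
  fix v w assume v: "v \<in> V" and w: "w \<in> V" and eq: "F v = F w"
  from w show "v = w"
  proof (cases rule: spine_pair_V_labels)
    case 1 then show ?thesis using vertex_of_label(1)[OF v] eq by metis
  next
    case 2 then show ?thesis using vertex_of_label(2)[OF v] eq by metis
  next
    case 3 then show ?thesis using vertex_of_label(3)[OF v] eq by metis
  next
    case 4 then show ?thesis using vertex_of_label(4)[OF v] eq by metis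
  next
    case 5 then show ?thesis using vertex_of_label(5)[OF v] eq by metis
  next
    case 6 then show ?thesis using vertex_of_label(6)[OF v] eq by metis
  qed
qed

lemma spine_pair_V_I:
  "Sp i \<in> V" "Sp (Suc i) \<in> V" "q < s1 \<Longrightarrow> Pd i q \<in> V" "q < s2 \<Longrightarrow> Pd (Suc i) q \<in> V"
  by (simp_all add: spine_pair_V_def)

lemma F_image: "F ` V = {0..N}"
proof (intro equalityI subsetI)
  fix n assume "n \<in> F ` V"
  then show "n \<in> {0..N}" using F_range by auto
next
  fix n assume n: "n \<in> {0..N}"
  consider "n = 0" | "1 \<le> n" "n \<le> K - int s2" | "K - int s2 < n" "n \<le> K" | "n = K + 1"
    | "K + 1 < n" "n \<le> M" | "M < n" using n by fastforce
  then show "n \<in> F ` V"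
  proof cases
    case 1 then show ?thesis using spine_pair_V_I(1) by force
  next
    case 2
    have "\<forall>t<R. lo t \<le> lo (Suc t)" using a_nonneg by (simp add: lo_Suc)
    with 2 obtain t where t: "t < R" "lo t \<le> n" "n < lo (Suc t)"
      using sequence_crossing[of R lo n] lo_0 lo_R by auto
    then have "n - lo t \<le> a t" by (simp add: lo_Suc)
    then show ?thesis using low_vertex[of t "n - lo t"] t by force
  next
    case 3 then show ?thesis using spine_pair_V_I(4)[of "nat (K - n)"] by force
  next
    case 4 then show ?thesis using spine_pair_V_I(2) by force
  next
    case 5
    have "\<forall>t<R. - hi t \<le> - hi (Suc t)" using b_nonneg by (simp add: hi_Suc)
    with 5 obtain t where t: "t < R" "- hi t \<le> - n" "- n < - hi (Suc t)"
      using sequence_crossing[of R "\<lambda>t. - hi t" "- n"] hi_0 hi_R by auto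
    then have "hi t - n \<le> b t" by (simp add: hi_Suc)
    then show ?thesis using high_vertex[of t "hi t - n"] t by force
  next
    case 6 then show ?thesis using spine_pair_V_I(3)[of "nat (N - n)"] n by (force simp: N_def)
  qed
qed

lemma finite_V: "finite V"
  using F_inj F_image by (simp add: finite_image_iff[symmetric])

lemma spine_pair_E_cases:
  assumes "e \<in> E"
  obtains "e = {Sp i, Sp (Suc i)}"
  | q where "q < s1" "e = {Sp i, Pd i q}"
  | q where "q < s2" "e = {Pd (Suc i) q, Sp (Suc i)}"
  | t where "t < R" "e = {Sp i, high_vertex t 0}"
  | t where "t < R" "e = {low_vertex t (a t), Sp (Suc i)}"
  | t l where "t < R" "0 \<le> l" "l < a t" "e = {low_vertex t l, high_vertex t 0}"
  | t l where "t < R" "0 < l" "l \<le> b t" "e = {low_vertex t (a t), high_vertex t l}"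
proof -
  have R_rev: "R - 1 - (R - 1 - c) = c" if "c < R" for c using that by simp
  from assms consider "e = {Sp i, Sp (Suc i)}" | q where "q < s1" "e = {Sp i, Pd i q}"
    | q where "q < s2" "e = {Sp (Suc i), Pd (Suc i) q}"
    | c where "c < R" "e = {Sp i, Ce i c}" | c where "c < R" "e = {Sp (Suc i), Ce (Suc i) c}"
    | c l where "c < R" "l < x ! c" "e = {Ce i c, Lf i c l}"
    | c l where "c < R" "l < y ! c" "e = {Ce (Suc i) c, Lf (Suc i) c l}"
    using assms unfolding spine_pair_E_def R_def length_y[unfolded R_def] Un_iff mem_Collect_eq singleton_iff
    by (elim disjE exE conjE) simp_all
  then show thesis
  proof cases
    case (3 q) then show thesis using that(3) by (simp add: insert_commute)
  next
    case (4 c)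
    then have "e = {Sp i, high_vertex (R - 1 - c) 0}" by (simp add: high_vertex_def R_rev)
    with 4 show thesis by (intro that(4)[of "R - 1 - c"]) auto
  next
    case (5 c)
    then have "e = {low_vertex c (a c), Sp (Suc i)}" by (simp add: low_vertex_def insert_commute)
    with 5 show thesis by (intro that(5)) auto
  next
    case (6 c l)
    then have l: "int l < a (R - 1 - c)" using a_rev[of c] by simp
    with 6 have "e = {low_vertex (R - 1 - c) (int l), high_vertex (R - 1 - c) 0}"
      by (simp add: low_vertex_def high_vertex_def R_rev insert_commute)
    with 6 l show thesis by (intro that(6)[of "R - 1 - c" "int l"]) auto
  next
    case (7 c l)
    then have "e = {low_vertex c (a c), high_vertex c (int l + 1)}" "int l < b c"
      by (simp_all add: low_vertex_def high_vertex_def b_def)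
    with 7 show thesis by (intro that(7)[of c "int l + 1"]) auto
  qed (use that in blast)+
qed

lemma spine_pair_E_I:
  shows "{Sp i, Sp (Suc i)} \<in> E"
    and "q < s1 \<Longrightarrow> {Sp i, Pd i q} \<in> E"
    and "q < s2 \<Longrightarrow> {Pd (Suc i) q, Sp (Suc i)} \<in> E"
    and "t < R \<Longrightarrow> {Sp i, high_vertex t 0} \<in> E"
    and "t < R \<Longrightarrow> {low_vertex t (a t), Sp (Suc i)} \<in> E"
    and "t < R \<Longrightarrow> 0 \<le> l \<Longrightarrow> l < a t \<Longrightarrow> {low_vertex t l, high_vertex t 0} \<in> E"
    and "t < R \<Longrightarrow> 0 < l \<Longrightarrow> l \<le> b t \<Longrightarrow> {low_vertex t (a t), high_vertex t l} \<in> E"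
proof -
  note E_iff = spine_pair_E_def Un_iff mem_Collect_eq singleton_iff
  show "{Sp i, Sp (Suc i)} \<in> E" by (simp add: spine_pair_E_def)
  show "q < s1 \<Longrightarrow> {Sp i, Pd i q} \<in> E" unfolding E_iff by blast
  show "q < s2 \<Longrightarrow> {Pd (Suc i) q, Sp (Suc i)} \<in> E" unfolding E_iff insert_commute[of "Pd _ _"] by blast
  show "t < R \<Longrightarrow> {Sp i, high_vertex t 0} \<in> E"
    unfolding E_iff high_vertex_def R_def by auto
  show "t < R \<Longrightarrow> {low_vertex t (a t), Sp (Suc i)} \<in> E"
    using length_y unfolding E_iff low_vertex_def insert_commute[of "Ce _ _"] by auto
  show "{low_vertex t l, high_vertex t 0} \<in> E" if "t < R" "0 \<le> l" "l < a t"
  proof -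
    have "nat l < x ! (R - 1 - t)" "R - 1 - t < length x" using that by (auto simp: a_def R_def)
    then show ?thesis
      using that unfolding E_iff low_vertex_def high_vertex_def insert_commute[of "Lf _ _ _"] by auto
  qed
  show "{low_vertex t (a t), high_vertex t l} \<in> E" if "t < R" "0 < l" "l \<le> b t"
  proof -
    have "nat (l - 1) < y ! t" "t < length y" using that length_y by (auto simp: b_def)
    then show ?thesis using that unfolding E_iff low_vertex_def high_vertex_def by auto
  qed
qed

lemma spine_pair_E_cut:
  assumes "e \<in> E"
  shows "\<exists>u v. e = {u, v} \<and> u \<in> V \<and> v \<in> V \<and> F u \<le> K \<and> K < F v"
  using assms
proof (cases rule: spine_pair_E_cases)
  case 1
  then show ?thesis using spine_pair_V_I K_bounds by (intro exI[of _ "Sp i"] exI[of _ "Sp (Suc i)"]) simp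
next
  case (2 q)
  then show ?thesis using spine_pair_V_I K_bounds by (intro exI[of _ "Sp i"] exI[of _ "Pd i q"]) (simp add: N_def)
next
  case (3 q)
  then show ?thesis using spine_pair_V_I K_bounds by (intro exI[of _ "Pd (Suc i) q"] exI[of _ "Sp (Suc i)"]) simp
next
  case (4 t)
  then show ?thesis using spine_pair_V_I(1) high_vertex[of t 0] hi_gt_K[of t] b_nonneg[of t] K_bounds
    by (intro exI[of _ "Sp i"] exI[of _ "high_vertex t 0"]) simp
next
  case (5 t)
  then show ?thesis using spine_pair_V_I(2) low_vertex[of t "a t"] lo_block_le[of t] a_nonneg[of t]
    by (intro exI[of _ "low_vertex t (a t)"] exI[of _ "Sp (Suc i)"]) simp
next
  case (6 t l)
  then show ?thesis using low_vertex[of t l] high_vertex[of t 0] lo_block_le[of t] hi_gt_K[of t] b_nonneg[of t]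
    by (intro exI[of _ "low_vertex t l"] exI[of _ "high_vertex t 0"]) simp
next
  case (7 t l)
  then show ?thesis using low_vertex[of t "a t"] high_vertex[of t l] lo_block_le[of t] hi_block_ge[of t] a_nonneg[of t]
    by (intro exI[of _ "low_vertex t (a t)"] exI[of _ "high_vertex t l"]) simp
qed

lemma graph_spine_pair: "graph V E"
proof -
  have "E \<subseteq> Pow V" using spine_pair_E_cut by blast
  then have "finite E" using finite_V by (simp add: finite_subset)
  moreover have "\<exists>u v. e = {u, v} \<and> u \<noteq> v \<and> u \<in> V \<and> v \<in> V" if "e \<in> E" for e
    using spine_pair_E_cut[OF that] by force
  ultimately show ?thesis by (simp add: graph_def)
qed

lemma interleave_even: "interleave x y (2 * t) = nat (a t)"
  by (simp add: interleave_def a_def R_def)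

lemma interleave_odd: "interleave x y (Suc (2 * t)) = nat (b t)"
  by (simp add: interleave_def b_def)

lemma sum_z_even: "sum_z (2 * t) = sum_a t + sum_b t"
proof (induction t)
  case (Suc t)
  have "sum_z (2 * Suc t) = sum_z (2 * t) + int (interleave x y (2 * t)) + int (interleave x y (Suc (2 * t)))"
    by (simp add: sum_z_def)
  then show ?case
    using Suc a_nonneg[of t] b_nonneg[of t] by (simp add: interleave_even interleave_odd sum_a_Suc sum_b_Suc)
qed (simp add: sum_z_def sum_a_def sum_b_def)

lemma sum_z_odd: "sum_z (Suc (2 * t)) = sum_a t + sum_b t + a t"
  using a_nonneg[of t] by (simp add: sum_z_def sum_z_even[unfolded sum_z_def] interleave_even)

lemma interleave_nth: "v < 2 * R \<Longrightarrow> interleave x y v = (y @ rev x) ! v"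
  using balanced_interleave[OF balanced] nth_map_upt[of v "2 * R" 0 "interleave x y"]
  by (simp add: R_def)

lemma sum_z_first_half: "n \<le> R \<Longrightarrow> sum_z n = sum_b n"
proof (induction n)
  case (Suc n)
  then have "interleave x y n = y ! n" using interleave_nth[of n] length_y by (simp add: nth_append)
  then show ?case using Suc by (simp add: sum_z_def sum_b_def b_def)
qed (simp add: sum_z_def sum_b_def)

lemma sum_z_second_half: "n \<le> R \<Longrightarrow> sum_z (R + n) = sum_b R + sum_a n"
proof (induction n)
  case (Suc n)
  then have "interleave x y (R + n) = x ! (R - 1 - n)"
    using interleave_nth[of "R + n"] length_y by (simp add: nth_append rev_nth R_def)
  then show ?case using Suc by (simp add: sum_z_def a_def sum_a_Suc)
qed (simp add: sum_z_first_half sum_a_def)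

definition "gap t = hi t - lo t"

lemma gap_Suc: "gap (Suc t) = gap t - a t - b t - 2"
  by (simp add: gap_def hi_Suc lo_Suc)

lemma gap_sum_z: "gap t = M - int (2 * t) - 1 - sum_a t - sum_b t"
  by (simp add: gap_def hi_def lo_def)

text \<open>The leaf edges of block \<open>t\<close> realise all labels in \<open>(gap (Suc t), gap t]\<close> except
  two; the edges from \<open>w\<^sub>1\<close>, \<open>w\<^sub>2\<close> to the branch centres realise the labels
  \<open>M - u - sum_z u\<close>, and balancedness is what makes these the missing ones.\<close>

lemma spine_edge_label:
  assumes "u < 2 * R"
  shows "\<exists>p q. {p, q} \<in> E \<and> \<bar>F p - F q\<bar> = M - int (Suc u) - sum_z (Suc u)"
proof (cases "Suc u \<le> R")
  case True
  then have val: "M - int (Suc u) - sum_z (Suc u) = hi (Suc u)" by (simp add: sum_z_first_half hi_def)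
  show ?thesis
  proof (cases "Suc u = R")
    case True
    then show ?thesis using val hi_R K_bounds spine_pair_E_I(1)
      by (intro exI[of _ "Sp i"] exI[of _ "Sp (Suc i)"]) simp
  next
    case False
    then have "Suc u < R" using \<open>Suc u \<le> R\<close> by simp
    then show ?thesis
      using val spine_pair_E_I(4) high_vertex(2)[of "Suc u" 0] hi_gt_K[of "Suc u"] b_nonneg K_bounds
      by (intro exI[of _ "Sp i"] exI[of _ "high_vertex (Suc u) 0"]) simp
  qed
next
  case False
  define n where "n = u - R"
  have n: "Suc u = R + Suc n" "n < R" using False assms by (simp_all add: n_def)
  then have "M - int (Suc u) - sum_z (Suc u) = K + 1 - (lo n + a n)"
    using sum_z_second_half[of "Suc n"] by (simp add: M_def lo_def sum_a_Suc)
  then show ?thesis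
    using n spine_pair_E_I(5) low_vertex(2)[of n "a n"] lo_block_le[of n] a_nonneg[of n]
    by (intro exI[of _ "low_vertex n (a n)"] exI[of _ "Sp (Suc i)"]) simp
qed

lemma block_edge_labels_cover:
  assumes t: "t < R" "gap (Suc t) < d" "d \<le> gap t" and d: "0 < d"
  shows "\<exists>u v. {u, v} \<in> E \<and> \<bar>F u - F v\<bar> = d"
proof -
  consider "gap t - a t < d" | "d = gap t - a t" | "gap t - a t - b t \<le> d" "d < gap t - a t"
    | "d = gap t - a t - b t - 1" using t gap_Suc[of t] by linarith
  then show ?thesis
  proof cases
    case 1
    then have l: "0 \<le> gap t - d" "gap t - d < a t" using t by simp_all
    have "{low_vertex t (gap t - d), high_vertex t 0} \<in> E" using spine_pair_E_I(6) t l by simp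
    moreover have "\<bar>F (low_vertex t (gap t - d)) - F (high_vertex t 0)\<bar> = d"
      using t l d low_vertex(2) high_vertex(2)[of t 0] b_nonneg[of t] by (simp add: gap_def)
    ultimately show ?thesis by blast
  next
    case 2
    have "M - int (Suc (2 * t)) - sum_z (Suc (2 * t)) = d" using 2 gap_sum_z[of t] sum_z_odd[of t] by simp
    then show ?thesis using spine_edge_label[of "2 * t"] t by simp
  next
    case 3
    then have l: "0 < gap t - a t - d" "gap t - a t - d \<le> b t" by simp_all
    have "{low_vertex t (a t), high_vertex t (gap t - a t - d)} \<in> E" using spine_pair_E_I(7) t l by simp
    moreover have "\<bar>F (low_vertex t (a t)) - F (high_vertex t (gap t - a t - d))\<bar> = d"
      using t l d low_vertex(2)[of t "a t"] high_vertex(2) a_nonneg[of t] by (simp add: gap_def)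
    ultimately show ?thesis by blast
  next
    case 4
    have "M - int (Suc (Suc (2 * t))) - sum_z (Suc (Suc (2 * t))) = d"
      using 4 gap_sum_z[of t] sum_z_even[of "Suc t"] by (simp add: sum_a_Suc sum_b_Suc)
    then show ?thesis using spine_edge_label[of "Suc (2 * t)"] t by simp
  qed
qed

lemma edge_labels_cover:
  assumes "1 \<le> d" "d \<le> N"
  shows "\<exists>u v. {u, v} \<in> E \<and> \<bar>F u - F v\<bar> = d"
proof -
  consider "M < d" | "d \<le> int s2" | "d = M" | "int s2 < d" "d < M" by linarith
  then show ?thesis
  proof cases
    case 1
    then show ?thesis using assms spine_pair_E_I(2)[of "nat (N - d)"]
      by (intro exI[of _ "Sp i"] exI[of _ "Pd i (nat (N - d))"]) (simp add: N_def)
  next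
    case 2
    then show ?thesis using assms spine_pair_E_I(3)[of "nat (d - 1)"]
      by (intro exI[of _ "Pd (Suc i) (nat (d - 1))"] exI[of _ "Sp (Suc i)"]) simp
  next
    case 3
    show ?thesis
    proof (cases "R = 0")
      case True
      then show ?thesis using 3 hi_0 hi_R K_bounds spine_pair_E_I(1)
        by (intro exI[of _ "Sp i"] exI[of _ "Sp (Suc i)"]) simp
    next
      case False
      then show ?thesis using 3 hi_0 K_bounds spine_pair_E_I(4)[of 0] high_vertex(2)[of 0 0] b_nonneg
        by (intro exI[of _ "Sp i"] exI[of _ "high_vertex 0 0"]) simp
    qed
  next
    case 4
    have "\<forall>t<R. - gap t \<le> - gap (Suc t)" using a_nonneg b_nonneg gap_Suc by auto
    moreover have "- gap 0 \<le> - d" "- d < - gap R" using 4 hi_0 lo_0 hi_R lo_R by (auto simp: gap_def)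
    ultimately obtain t where "t < R" "gap (Suc t) < d" "d \<le> gap t"
      using sequence_crossing[of R "\<lambda>t. - gap t" "- d"] by auto
    then show ?thesis using assms(1) by (intro block_edge_labels_cover) simp_all
  qed
qed

text \<open>Every edge joins a vertex other than \<open>w\<^sub>1\<close> to its parent, so \<open>|E| \<le> |V| - 1 = N\<close>.\<close>

fun parent :: "lv \<Rightarrow> lv" where
  "parent (Sp j) = Sp i"
| "parent (Pd j q) = Sp j"
| "parent (Ce j c) = Sp j"
| "parent (Lf j c l) = Ce j c"

lemma E_subset_parent_edges: "E \<subseteq> (\<lambda>v. {parent v, v}) ` (V - {Sp i})"
proof
  fix e assume "e \<in> E"
  then show "e \<in> (\<lambda>v. {parent v, v}) ` (V - {Sp i})"
  proof (cases rule: spine_pair_E_cases)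
    case 1 then show ?thesis using spine_pair_V_I(2) by (intro image_eqI[of _ _ "Sp (Suc i)"]) auto
  next
    case (2 q) then show ?thesis using spine_pair_V_I(3) by (intro image_eqI[of _ _ "Pd i q"]) auto
  next
    case (3 q)
    then show ?thesis using spine_pair_V_I(4) by (intro image_eqI[of _ _ "Pd (Suc i) q"]) auto
  next
    case (4 t)
    then show ?thesis using high_vertex(1)[of t 0] b_nonneg[of t]
      by (intro image_eqI[of _ _ "high_vertex t 0"]) (auto simp: high_vertex_def)
  next
    case (5 t)
    then show ?thesis using low_vertex(1)[of t "a t"] a_nonneg[of t]
      by (intro image_eqI[of _ _ "low_vertex t (a t)"]) (auto simp: low_vertex_def)
  next
    case (6 t l)
    then show ?thesis using low_vertex(1)[of t l]
      by (intro image_eqI[of _ _ "low_vertex t l"]) (auto simp: low_vertex_def high_vertex_def)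
  next
    case (7 t l)
    then show ?thesis using high_vertex(1)[of t l]
      by (intro image_eqI[of _ _ "high_vertex t l"]) (auto simp: low_vertex_def high_vertex_def)
  qed
qed

lemma card_V: "card V = nat N + 1"
proof -
  have "card V = card (F ` V)" using F_inj by (simp add: card_image)
  then show ?thesis using F_image K_bounds by (simp add: N_def)
qed

lemma card_E_le: "card E \<le> nat N"
proof -
  have "card E \<le> card ((\<lambda>v. {parent v, v}) ` (V - {Sp i}))"
    using E_subset_parent_edges finite_V by (intro card_mono) auto
  also have "\<dots> \<le> card (V - {Sp i})" by (rule card_image_le) (use finite_V in simp)
  also have "\<dots> = nat N" using card_V spine_pair_V_I(1) finite_V by simp
  finally show ?thesis .
qed

theorem complete_alpha_labeling_spine_pair:
  "complete_alpha_labeling V E (nat \<circ> F) (nat K)" and card_E: "card E = nat N"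
proof -
  let ?f = "nat \<circ> F"
  have f: "int (?f v) = F v" if "v \<in> V" for v using F_range[OF that] by simp
  have "{1..N} \<subseteq> edge_label ?f ` E"
  proof
    fix d assume "d \<in> {1..N}"
    then obtain u v where uv: "{u, v} \<in> E" "\<bar>F u - F v\<bar> = d" using edge_labels_cover[of d] by auto
    moreover have "u \<in> V" "v \<in> V" using graph_edge_subset[OF graph_spine_pair uv(1)] by auto
    ultimately show "d \<in> edge_label ?f ` E" by (metis edge_label_doubleton f image_eqI)
  qed
  moreover have fin_E: "finite E" using graph_spine_pair by (simp add: graph_def)
  ultimately have "card {1..N} \<le> card (edge_label ?f ` E)" by (intro card_mono) auto
  then have "nat N \<le> card (edge_label ?f ` E)" by simp
  moreover have "card (edge_label ?f ` E) \<le> card E" using fin_E by (rule card_image_le)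
  ultimately have labels: "card (edge_label ?f ` E) = card E" and card: "card E = nat N"
    using card_E_le by linarith+
  then show "card E = nat N" by simp
  have "inj_on (edge_label ?f) E"
    using labels fin_E by (simp add: eq_card_imp_inj_on)
  moreover have "bij_betw ?f V {0..card E}"
  proof -
    have inj: "inj_on ?f V" using F_inj f by (metis inj_on_def)
    moreover have "?f ` V \<subseteq> {0..card E}" using F_range card by (force intro: nat_mono)
    moreover have "card (?f ` V) = card {0..card E}" using card_image[OF inj] card card_V by simp
    ultimately show ?thesis by (simp add: bij_betw_def card_subset_eq)
  qed
  moreover have "Min (?f ` e) \<le> nat K \<and> nat K < Max (?f ` e)" if "e \<in> E" for e
    using spine_pair_E_cut[OF that] K_bounds by auto
  ultimately show "complete_alpha_labeling V E ?f (nat K)"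
    by (simp add: complete_alpha_labeling_iff[OF graph_spine_pair])
qed

end

section \<open>Pairwise balanced lobsters\<close>

lemma spine_pair_labeling:
  assumes "balanced x y"
  shows "graph (spine_pair_V i s1 s2 x y) (spine_pair_E i s1 s2 x y)"
    and "\<exists>f k. complete_alpha_labeling (spine_pair_V i s1 s2 x y) (spine_pair_E i s1 s2 x y) f k \<and>
      f (Sp i) = 0 \<and> f (Sp (Suc i)) = Suc k \<and> k \<le> card (spine_pair_E i s1 s2 x y)"
proof -
  interpret spine_pair i s1 s2 x y using assms by unfold_locales
  show "graph V E" by (rule graph_spine_pair)
  have "nat (K + 1) = Suc (nat K)" "nat K \<le> nat N" using K_bounds by (simp_all add: N_def)
  then show "\<exists>f k. complete_alpha_labeling V E f k \<and> f (Sp i) = 0 \<and> f (Sp (Suc i)) = Suc k \<and> k \<le> card E"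
    using complete_alpha_labeling_spine_pair card_E by (intro exI[of _ "nat \<circ> F"] exI[of _ "nat K"]) simp
qed

lemma lob_V_Suc_Suc:
  "lob_V (Suc (Suc r)) s b = lob_V r s b \<union> spine_pair_V r (s r) (s (Suc r)) (b r) (b (Suc r))"
  by (rule set_eqI)
    (simp only: lob_V_def spine_pair_V_def Un_iff mem_Collect_eq insert_iff singleton_iff less_Suc_eq
      ex_disj_distrib conj_disj_distribR conj_disj_distribL simp_thms ex_simps,
     simp, simp only: disj_ac)

lemma lob_E_2: "lob_E 2 s b = spine_pair_E 0 (s 0) (s 1) (b 0) (b 1)"
  by (rule set_eqI)
    (simp only: lob_E_def spine_pair_E_def numeral_2_eq_2 Un_iff mem_Collect_eq singleton_iff less_Suc_eq
      ex_disj_distrib conj_disj_distribR conj_disj_distribL simp_thms ex_simps,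
     simp)

lemma lob_E_Suc_Suc:
  "lob_E (Suc (Suc (Suc r))) s b = lob_E (Suc r) s b \<union>
     spine_pair_E (Suc r) (s (Suc r)) (s (Suc (Suc r))) (b (Suc r)) (b (Suc (Suc r))) \<union> {{Sp r, Sp (Suc r)}}"
  by (rule set_eqI)
    (simp only: lob_E_def spine_pair_E_def Un_iff mem_Collect_eq singleton_iff less_Suc_eq
      ex_disj_distrib conj_disj_distribR conj_disj_distribL simp_thms ex_simps,
     simp, simp only: disj_ac)

lemma lob_V_disjoint: "lob_V r s b \<inter> spine_pair_V r s1 s2 x y = {}"
  unfolding lob_V_def spine_pair_V_def by auto

text \<open>The last spine vertex carries the label right above the critical number, which is where
  the next pair is attached.\<close>

lemma complete_alpha_labeling_lob:
  assumes "\<forall>i<2 * Suc p. even i \<longrightarrow> balanced (b i) (b (Suc i))"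
  shows "graph (lob_V (2 * Suc p) s b) (lob_E (2 * Suc p) s b) \<and>
    (\<exists>f k. complete_alpha_labeling (lob_V (2 * Suc p) s b) (lob_E (2 * Suc p) s b) f k \<and>
      f (Sp (Suc (2 * p))) = Suc k)"
  using assms
proof (induction p)
  case 0
  then have "balanced (b 0) (b (Suc 0))" by simp
  note pair = spine_pair_labeling[OF this, of 0 "s 0" "s (Suc 0)"]
  have "lob_V (2 * Suc 0) s b = spine_pair_V 0 (s 0) (s (Suc 0)) (b 0) (b (Suc 0))"
    using lob_V_Suc_Suc[of 0 s b] by (simp add: numeral_2_eq_2 lob_V_def[of 0])
  moreover have "lob_E (2 * Suc 0) s b = spine_pair_E 0 (s 0) (s (Suc 0)) (b 0) (b (Suc 0))"
    using lob_E_2 by (simp add: numeral_2_eq_2)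
  ultimately show ?case using pair by auto
next
  case (Suc p)
  define r where "r = Suc (2 * p)"
  let ?V1 = "lob_V (Suc r) s b" and ?E1 = "lob_E (Suc r) s b"
  let ?V2 = "spine_pair_V (Suc r) (s (Suc r)) (s (Suc (Suc r))) (b (Suc r)) (b (Suc (Suc r)))"
  let ?E2 = "spine_pair_E (Suc r) (s (Suc r)) (s (Suc (Suc r))) (b (Suc r)) (b (Suc (Suc r)))"
  have r: "2 * Suc p = Suc r" "2 * Suc (Suc p) = Suc (Suc (Suc r))" "Suc (2 * Suc p) = Suc (Suc r)"
    by (simp_all add: r_def)
  have "\<forall>i<2 * Suc p. even i \<longrightarrow> balanced (b i) (b (Suc i))" using Suc.prems by simp
  from Suc.IH[OF this] obtain f1 k1 where G1: "graph ?V1 ?E1"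
    and lab1: "complete_alpha_labeling ?V1 ?E1 f1 k1" and f1: "f1 (Sp r) = Suc k1"
    unfolding r(1) r_def[symmetric] by auto
  have "balanced (b (Suc r)) (b (Suc (Suc r)))" using Suc.prems r(2) by (simp add: r_def)
  from spine_pair_labeling[OF this] obtain f2 k2 where G2: "graph ?V2 ?E2"
    and lab2: "complete_alpha_labeling ?V2 ?E2 f2 k2"
    and f2: "f2 (Sp (Suc r)) = 0" "f2 (Sp (Suc (Suc r))) = Suc k2" and k2: "k2 \<le> card ?E2"
    by blast
  have a: "Sp r \<in> ?V1" and b: "Sp (Suc r) \<in> ?V2" "Sp (Suc (Suc r)) \<in> ?V2"
    by (simp_all add: lob_V_def spine_pair_V_def)
  have disj: "?V1 \<inter> ?V2 = {}" by (rule lob_V_disjoint)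
  have "graph (?V1 \<union> ?V2) (?E1 \<union> ?E2 \<union> {{Sp r, Sp (Suc r)}})"
    using G1 G2 a b(1) by (rule graph_join) simp
  moreover obtain g where "complete_alpha_labeling (?V1 \<union> ?V2) (?E1 \<union> ?E2 \<union> {{Sp r, Sp (Suc r)}}) g (k1 + k2 + 1)"
    and g: "\<forall>v\<in>?V2. g v = f2 v + k1 + 1"
    using complete_alpha_labeling_join[OF lab1 G1 lab2 G2 disj a f1 b(1) f2(1) k2] by blast
  moreover have "g (Sp (Suc (Suc r))) = Suc (k1 + k2 + 1)" using g b(2) f2(2) by simp
  ultimately show ?case unfolding r lob_V_Suc_Suc lob_E_Suc_Suc by blast
qed

theorem corollary4p12:
  fixes V :: "'a set" and E :: "'a set set"
  assumes "pairwise_balanced_lobster V E"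
  shows "\<exists>f k. complete_alpha_labeling V E f k"
proof -
  obtain r s b \<phi> where descr: "pairwise_balanced_descr r s b" and \<phi>: "bij_betw \<phi> (lob_V r s b) V"
    and E: "E = (`) \<phi> ` lob_E r s b"
    using assms unfolding pairwise_balanced_lobster_def by blast
  then have "0 < r" "even r" and bal: "\<forall>i<r. even i \<longrightarrow> balanced (b i) (b (Suc i))"
    unfolding pairwise_balanced_descr_def lobster_descr_def by blast+
  then obtain p where r: "r = 2 * Suc p" by (metis evenE gr0_conv_Suc nat_0_less_mult_iff)
  obtain f k where "graph (lob_V r s b) (lob_E r s b)"
    and "complete_alpha_labeling (lob_V r s b) (lob_E r s b) f k"
    using complete_alpha_labeling_lob[of p b s] bal unfolding r by blast
  then show ?thesis unfolding E using complete_alpha_labeling_image[OF _ _ \<phi>] by blast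
qed

end
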